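(* Let $a\ge2$, $d\ge1$ and $s$ be integers with $\gcd(a,d)=1$ and $1\le s<a$, and put $b=a+sd$. Let $\mathit{NR}$ be the set of positive integers not representable as $\sum_{i=0}^s(a+id)x_i$ with $x_0,\dots,x_s$ nonnegative integers, and let $S_m=\sum_{n\in\mathit{NR}}n^m$. Then, as an identity of functions (equivalently of power series about $z=0$), \[ \sum_{m=0}^\infty S_m\frac{z^m}{m!}=\frac{e^{\lceil\frac{b-1}{s}\rceil az}-1}{(e^{dz}-1)(e^{az}-1)}+\frac{e^{\lceil\frac{a-1}{s}\rceil bz}-1}{(e^{-dz}-1)(e^{bz}-1)}-\frac{1}{e^z-1}. \]
   Context: $\lceil x\rceil$ is the least integer not less than $x$. *)

theory Defs
  imports "HOL-Analysis.Analysis"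
begin

definition NR :: "nat \<Rightarrow> nat \<Rightarrow> nat \<Rightarrow> nat set" where
  "NR a d s = {n. 0 < n \<and> \<not> (\<exists>x :: nat \<Rightarrow> nat. n = (\<Sum>i\<le>s. (a + i * d) * x i))}"

definition S :: "nat \<Rightarrow> nat \<Rightarrow> nat \<Rightarrow> nat \<Rightarrow> nat" where
  "S a d s m = (\<Sum>n\<in>NR a d s. n ^ m)"

end

theory Submission
  imports Defs "HOL-Number_Theory.Cong"
begin

(* A number is representable iff it equals k a + j d with j \<le> k s. As gcd(a, d) = 1, every
   residue class modulo a is that of j d for a unique j < a, and its least representable element is
   w_j = j d + a \<lceil>j/s\<rceil>; the non-representable numbers of the class are exactly those below w_j.
   Summing geometric progressions gives
     (x^a - 1) \<Sum>_{n \<in> NR} x^n = \<Sum>_{j<a} x^{w_j} - \<Sum>_{j<a} x^j,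
   and \<Sum>_{j<a} x^{w_j} telescopes because w_{j+1} - w_j is d, plus a when s divides j.
   Putting x = e^z, the power sums S_m become the Taylor coefficients of \<Sum>_{n \<in> NR} e^{n z}. *)

lemma ceil_div_le_iff:
  fixes j k s :: nat
  assumes "0 < s"
  shows "(j + s - 1) div s \<le> k \<longleftrightarrow> j \<le> k * s"
proof -
  have "(j + s - 1) div s \<le> k \<longleftrightarrow> j + s - 1 < Suc k * s"
    using assms by (simp add: div_less_iff_less_mult flip: less_Suc_eq_le)
  also have "\<dots> \<longleftrightarrow> j \<le> k * s"
    using assms by auto
  finally show ?thesis .
qed

lemma ceil_div_Suc:
  fixes j s :: nat
  assumes "0 < s"
  shows "(Suc j + s - 1) div s = (j + s - 1) div s + (if s dvd j then 1 else 0)"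
proof (cases "s dvd j")
  case True
  then obtain q where "j = s * q" by blast
  moreover have "(s * q + s - 1) div s = q"
    using assms by (simp add: div_nat_eqI)
  ultimately show ?thesis
    using assms by simp
next
  case False
  define q r where "q = j div s" and "r = j mod s"
  have "j = s * q + r" "0 < r" "r < s"
    using False assms by (auto simp: q_def r_def dvd_eq_mod_eq_0)
  then have "(j + s - 1) div s = Suc q" "(Suc j + s - 1) div s = Suc q"
    by (auto intro!: div_nat_eqI)
  with False show ?thesis by simp
qed

lemma ceiling_of_nat_divide:
  fixes m s :: nat
  assumes "0 < s"
  shows "\<lceil>real m / real s\<rceil> = int ((m + s - 1) div s)"
proof (rule ceiling_unique)
  define c where "c = (m + s - 1) div s"
  have "m \<le> c * s"
    using ceil_div_le_iff[OF assms, of m c] by (simp add: c_def)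
  then show "real m / real s \<le> real_of_int (int c)"
    using assms by (simp add: divide_le_eq flip: of_nat_mult)
  have "(real c - 1) * real s < real m"
  proof (cases "c = 0")
    case False
    then obtain c' where c': "c = Suc c'"
      using not0_implies_Suc by blast
    have "c' * s < m"
      using ceil_div_le_iff[OF assms, of m c', folded c_def] by (simp add: c')
    then show ?thesis
      by (simp add: c' flip: of_nat_mult)
  qed (use assms in simp)
  then show "real_of_int (int c) - 1 < real m / real s"
    using assms by (simp add: less_divide_eq)
qed

lemma representable_iff_bounded_combination:
  fixes a d s n :: nat
  shows "(\<exists>x::nat \<Rightarrow> nat. n = (\<Sum>i\<le>s. (a + i * d) * x i))
     \<longleftrightarrow> (\<exists>k j. n = k * a + j * d \<and> j \<le> k * s)"
proof
  assume "\<exists>x::nat \<Rightarrow> nat. n = (\<Sum>i\<le>s. (a + i * d) * x i)"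
  then obtain x :: "nat \<Rightarrow> nat" where x: "n = (\<Sum>i\<le>s. (a + i * d) * x i)" ..
  have "n = (\<Sum>i\<le>s. x i) * a + (\<Sum>i\<le>s. i * x i) * d"
    unfolding x by (simp add: algebra_simps sum.distrib sum_distrib_left)
  moreover have "(\<Sum>i\<le>s. i * x i) \<le> (\<Sum>i\<le>s. x i) * s"
    unfolding sum_distrib_right by (rule sum_mono) (simp add: mult.commute)
  ultimately show "\<exists>k j. n = k * a + j * d \<and> j \<le> k * s" by blast
next
  assume "\<exists>k j. n = k * a + j * d \<and> j \<le> k * s"
  then obtain k j where n: "n = k * a + j * d" and "j \<le> k * s" by blast
  from \<open>j \<le> k * s\<close> have "\<exists>x::nat \<Rightarrow> nat. k * a + j * d = (\<Sum>i\<le>s. (a + i * d) * x i)"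
  proof (induction k arbitrary: j)
    case 0
    then show ?case by (intro exI[of _ "\<lambda>_. 0"]) simp
  next
    case (Suc k)
    define i r where "i = min j s" and "r = j - min j s"
    have j: "j = i + r" and "r \<le> k * s"
      using Suc.prems by (auto simp: i_def r_def)
    then obtain x where x: "k * a + r * d = (\<Sum>i\<le>s. (a + i * d) * x i)"
      using Suc.IH by blast
    define y where "y i' = x i' + (if i' = i then 1 else 0)" for i'
    have "(\<Sum>i'\<le>s. (a + i' * d) * y i')
        = (\<Sum>i'\<le>s. (a + i' * d) * x i' + (if i' = i then a + i' * d else 0))"
      by (rule sum.cong) (simp_all add: y_def)
    also have "\<dots> = (\<Sum>i'\<le>s. (a + i' * d) * x i') + (a + i * d)"
      by (simp add: sum.distrib i_def)
    also have "\<dots> = Suc k * a + j * d"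
      unfolding j x[symmetric] by (simp add: algebra_simps)
    finally show ?case by metis
  qed
  then show "\<exists>x::nat \<Rightarrow> nat. n = (\<Sum>i\<le>s. (a + i * d) * x i)"
    unfolding n .
qed

lemma NR_eq_not_bounded_combination:
  "NR a d s = {n. \<not> (\<exists>k j. n = k * a + j * d \<and> j \<le> k * s)}"
proof -
  have "0 < n" if "\<not> (\<exists>k j. n = k * a + j * d \<and> j \<le> k * s)" for n
  proof (rule gr0I)
    assume "n = 0"
    then have "n = 0 * a + 0 * d \<and> 0 \<le> 0 * s" by simp
    with that show False by blast
  qed
  then show ?thesis
    unfolding NR_def representable_iff_bounded_combination by blast
qed

lemma bij_betw_mult_mod:
  fixes a d :: nat
  assumes "coprime d a"
  shows "bij_betw (\<lambda>j. j * d mod a) {..<a} {..<a}"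
proof (cases "a = 0")
  case False
  have "inj_on (\<lambda>j. j * d mod a) {..<a}"
  proof (rule inj_onI)
    fix i j assume "i \<in> {..<a}" "j \<in> {..<a}" "i * d mod a = j * d mod a"
    then show "i = j"
      using cong_mult_rcancel_nat[OF assms] by (simp add: cong_def)
  qed
  moreover have "(\<lambda>j. j * d mod a) ` {..<a} \<subseteq> {..<a}"
    using False by auto
  ultimately show ?thesis
    by (simp add: bij_betw_def endo_inj_surj)
qed (simp add: bij_betw_def)

(* For j < a this is the least representable number congruent to j d modulo a, i.e. an element of
   the Apery set of the semigroup with respect to a (bounded_combination_iff_apery_le). *)
definition apery :: "nat \<Rightarrow> nat \<Rightarrow> nat \<Rightarrow> nat \<Rightarrow> nat" where
  "apery a d s j = j * d + a * ((j + s - 1) div s)"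

lemma apery_Suc:
  assumes "0 < s"
  shows "apery a d s (Suc j) = apery a d s j + d + (if s dvd j then a else 0)"
  using ceil_div_Suc[OF assms, of j] by (simp add: apery_def algebra_simps)

lemma apery_mod:
  "apery a d s j mod a = j * d mod a"
  by (simp add: apery_def)

lemma bounded_combination_iff_apery_le:
  fixes a d s n j :: nat
  assumes "coprime a d" "0 < s" "j < a" "[n = j * d] (mod a)"
  shows "(\<exists>k i. n = k * a + i * d \<and> i \<le> k * s) \<longleftrightarrow> apery a d s j \<le> n"
proof
  assume "\<exists>k i. n = k * a + i * d \<and> i \<le> k * s"
  then obtain k i where n: "n = k * a + i * d" and "i \<le> k * s" by blast
  have "[i * d = j * d] (mod a)"
    using assms(4) unfolding n by (simp add: cong_def)
  then have "i mod a = j"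
    using cong_mult_rcancel_nat[of d a i j] assms(1,3) by (simp add: cong_def ac_simps)
  then obtain t where i: "i = j + a * t"
    using mod_mult_div_eq[of i a] by metis
  have "j \<le> (k + t * d) * s"
    using \<open>i \<le> k * s\<close> unfolding i by (simp add: algebra_simps)
  then have "(j + s - 1) div s \<le> k + t * d"
    using ceil_div_le_iff[OF assms(2)] by blast
  then have "a * ((j + s - 1) div s) \<le> a * (k + t * d)"
    by (rule mult_le_mono2)
  then show "apery a d s j \<le> n"
    unfolding apery_def n i by (simp add: algebra_simps)
next
  assume le: "apery a d s j \<le> n"
  then have "j * d \<le> n" by (simp add: apery_def)
  with assms(4) have "a dvd n - j * d"
    by (simp add: cong_altdef_nat)
  then obtain K where K: "n = j * d + a * K"
    using \<open>j * d \<le> n\<close> by (metis dvdE le_add_diff_inverse)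
  then have "(j + s - 1) div s \<le> K"
    using le assms(3) by (simp add: apery_def)
  then have "j \<le> K * s"
    using ceil_div_le_iff[OF assms(2)] by blast
  moreover have "n = K * a + j * d"
    using K by simp
  ultimately show "\<exists>k i. n = k * a + i * d \<and> i \<le> k * s"
    by blast
qed

lemma NR_eq_Union_apery:
  assumes "coprime a d" "0 < a" "0 < s"
  shows "NR a d s = (\<Union>j<a. {n. [n = j * d] (mod a) \<and> n < apery a d s j})"
proof (rule set_eqI)
  fix n
  have "n mod a \<in> (\<lambda>j. j * d mod a) ` {..<a}"
    using bij_betw_mult_mod[of d a] assms(1,2) by (simp add: bij_betw_def coprime_commute)
  then obtain j where j: "j < a" "[n = j * d] (mod a)"
    by (auto simp: cong_def)
  show "n \<in> NR a d s \<longleftrightarrow> n \<in> (\<Union>j<a. {n. [n = j * d] (mod a) \<and> n < apery a d s j})"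
  proof
    assume "n \<in> NR a d s"
    then show "n \<in> (\<Union>j<a. {n. [n = j * d] (mod a) \<and> n < apery a d s j})"
      using j bounded_combination_iff_apery_le[OF assms(1,3) j]
      by (auto simp: NR_eq_not_bounded_combination)
  next
    assume "n \<in> (\<Union>j<a. {n. [n = j * d] (mod a) \<and> n < apery a d s j})"
    then obtain i where "i < a" "[n = i * d] (mod a)" "n < apery a d s i"
      by blast
    then show "n \<in> NR a d s"
      using bounded_combination_iff_apery_le[OF assms(1,3), of i n]
      by (simp add: NR_eq_not_bounded_combination)
  qed
qed

lemma finite_NR:
  assumes "coprime a d" "0 < a" "0 < s"
  shows "finite (NR a d s)"
  unfolding NR_eq_Union_apery[OF assms] by auto

lemma residue_class_below_eq_image:
  fixes a m :: nat
  assumes "0 < a"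
  shows "{n. [n = m] (mod a) \<and> n < m} = (\<lambda>l. m mod a + l * a) ` {..<m div a}"
proof (intro set_eqI iffI)
  fix n
  assume "n \<in> {n. [n = m] (mod a) \<and> n < m}"
  then have mod: "n mod a = m mod a" and "n < m"
    by (simp_all add: cong_def)
  then have "n div a * a < m div a * a"
    using mod_div_mult_eq[of n a] mod_div_mult_eq[of m a] by linarith
  then have "n div a < m div a"
    using assms by simp
  moreover have "n = m mod a + n div a * a"
    using mod mod_div_mult_eq[of n a] by simp
  ultimately show "n \<in> (\<lambda>l. m mod a + l * a) ` {..<m div a}"
    by (auto intro: rev_image_eqI)
next
  fix n
  assume "n \<in> (\<lambda>l. m mod a + l * a) ` {..<m div a}"
  then obtain l where "l < m div a" and n: "n = m mod a + l * a"
    by blast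
  then have "l * a < m div a * a"
    using assms by simp
  then have "n < m"
    using n mod_div_mult_eq[of m a] by linarith
  then show "n \<in> {n. [n = m] (mod a) \<and> n < m}"
    using n by (simp add: cong_def)
qed

lemma geometric_sum_residue_class:
  fixes x :: "'a::comm_ring_1" and a m :: nat
  assumes "0 < a"
  shows "(x ^ a - 1) * (\<Sum>n | [n = m] (mod a) \<and> n < m. x ^ n) = x ^ m - x ^ (m mod a)"
proof -
  note residue_class_below_eq_image[OF assms, of m]
  moreover have "inj_on (\<lambda>l. m mod a + l * a) {..<m div a}"
    using assms by (auto intro: inj_onI)
  ultimately have "(\<Sum>n | [n = m] (mod a) \<and> n < m. x ^ n)
      = x ^ (m mod a) * (\<Sum>l<m div a. (x ^ a) ^ l)"
    by (simp add: sum.reindex sum_distrib_left power_add mult.commute[of _ a] power_mult)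
  then have "(x ^ a - 1) * (\<Sum>n | [n = m] (mod a) \<and> n < m. x ^ n)
      = x ^ (m mod a) * ((x ^ a) ^ (m div a) - 1)"
    by (simp add: power_diff_1_eq)
  also have "\<dots> = x ^ (m mod a + a * (m div a)) - x ^ (m mod a)"
    by (simp only: power_add power_mult right_diff_distrib mult_1_right)
  also have "\<dots> = x ^ m - x ^ (m mod a)"
    by simp
  finally show ?thesis .
qed

lemma NR_generating_polynomial:
  fixes x :: "'a::comm_ring_1"
  assumes "coprime a d" "0 < a" "0 < s"
  shows "(x ^ a - 1) * (\<Sum>n\<in>NR a d s. x ^ n)
    = (\<Sum>j<a. x ^ apery a d s j) - (\<Sum>j<a. x ^ j)"
proof -
  define C where "C j = {n. [n = j * d] (mod a) \<and> n < apery a d s j}" for j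
  have C_apery: "C j = {n. [n = apery a d s j] (mod a) \<and> n < apery a d s j}" for j
    by (simp add: C_def cong_def apery_mod)
  have "C i \<inter> C j = {}" if "i \<in> {..<a}" "j \<in> {..<a}" "i \<noteq> j" for i j
  proof -
    have "\<not> [i * d = j * d] (mod a)"
      using that cong_mult_rcancel_nat[of d a i j] assms(1) by (simp add: cong_def coprime_commute)
    then show ?thesis
      by (auto simp: C_def cong_def)
  qed
  then have "(\<Sum>n\<in>NR a d s. x ^ n) = (\<Sum>j<a. \<Sum>n\<in>C j. x ^ n)"
    unfolding NR_eq_Union_apery[OF assms] C_def[symmetric]
    by (intro sum.UNION_disjoint) (auto simp: C_def)
  then have "(x ^ a - 1) * (\<Sum>n\<in>NR a d s. x ^ n) = (\<Sum>j<a. (x ^ a - 1) * (\<Sum>n\<in>C j. x ^ n))"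
    by (simp add: sum_distrib_left)
  also have "\<dots> = (\<Sum>j<a. x ^ apery a d s j - x ^ (j * d mod a))"
    by (simp add: C_apery geometric_sum_residue_class[OF assms(2)] apery_mod)
  also have "\<dots> = (\<Sum>j<a. x ^ apery a d s j) - (\<Sum>j<a. x ^ j)"
    using sum.reindex_bij_betw[OF bij_betw_mult_mod, of d a "\<lambda>j. x ^ j"] assms(1)
    by (simp add: sum_subtractf coprime_commute)
  finally show ?thesis .
qed

lemma apery_sum_telescope:
  fixes x :: "'a::comm_ring_1"
  assumes "0 < s"
  shows "(x ^ d - 1) * (\<Sum>j\<le>N. x ^ apery a d s j)
    = x ^ (apery a d s N + d) - 1
      - x ^ d * (x ^ a - 1) * (\<Sum>t<(N + s - 1) div s. x ^ (t * (a + s * d)))"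
proof (induction N)
  case 0
  then show ?case
    using assms by (simp add: apery_def)
next
  case (Suc N)
  have split: "(x ^ d - 1) * (\<Sum>j\<le>Suc N. x ^ apery a d s j)
      = (x ^ d - 1) * (\<Sum>j\<le>N. x ^ apery a d s j) + (x ^ d - 1) * x ^ apery a d s (Suc N)"
    by (simp add: distrib_left)
  show ?case
  proof (cases "s dvd N")
    case True
    then obtain q where "N = s * q" ..
    then have "(N + s - 1) div s = q" "apery a d s N = q * (a + s * d)"
      using assms by (simp_all add: apery_def div_nat_eqI algebra_simps)
    then show ?thesis
      using Suc.IH split True apery_Suc[OF assms] ceil_div_Suc[OF assms]
      by (simp add: power_add algebra_simps)
  next
    case False
    then show ?thesis
      using Suc.IH split apery_Suc[OF assms] ceil_div_Suc[OF assms]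
      by (simp add: power_add algebra_simps)
  qed
qed

lemma NR_generating_function:
  fixes x :: "'a::field"
  assumes "coprime a d" "0 < a" "0 < s" "b = a + s * d"
    and "x \<noteq> 0" "x ^ d \<noteq> 1" "x ^ a \<noteq> 1" "x ^ b \<noteq> 1" "x \<noteq> 1"
  defines "q \<equiv> (a - 1 + s - 1) div s"
  shows "(\<Sum>n\<in>NR a d s. x ^ n)
    = (x ^ (a * (q + d)) - 1) / ((x ^ d - 1) * (x ^ a - 1))
      + (x ^ (q * b) - 1) / ((inverse (x ^ d) - 1) * (x ^ b - 1)) - 1 / (x - 1)"
proof -
  define T where "T = (\<Sum>j<a. x ^ apery a d s j)"
  define U where "U = (\<Sum>j<a. x ^ j)"
  define G where "G = (\<Sum>t<q. x ^ (t * b))"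
  have nonzero: "x ^ d - 1 \<noteq> 0" "x ^ a - 1 \<noteq> 0" "x ^ b - 1 \<noteq> 0" "x - 1 \<noteq> 0"
    using assms(6-9) by simp_all
  have "(x ^ a - 1) * (\<Sum>n\<in>NR a d s. x ^ n) = T - U"
    using NR_generating_polynomial[OF assms(1-3)] by (simp add: T_def U_def)
  then have "(\<Sum>n\<in>NR a d s. x ^ n) = T / (x ^ a - 1) - U / (x ^ a - 1)"
    using nonzero by (simp add: eq_divide_eq ac_simps flip: diff_divide_distrib)
  moreover have "(x - 1) * U = x ^ a - 1"
    using power_diff_1_eq[of x a] by (simp add: U_def)
  then have "U / (x ^ a - 1) = 1 / (x - 1)"
    using nonzero by (simp add: field_simps)
  moreover have "(x ^ d - 1) * T = x ^ (a * (q + d)) - 1 - x ^ d * (x ^ a - 1) * G"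
  proof -
    obtain a' where "a = Suc a'"
      using assms(2) gr0_implies_Suc by blast
    then have "{..a - 1} = {..<a}" "apery a d s (a - 1) + d = a * (q + d)"
      by (auto simp: apery_def q_def algebra_simps)
    then show ?thesis
      using apery_sum_telescope[OF assms(3), of x d a "a - 1"] assms(4)
      by (simp add: T_def G_def q_def ac_simps)
  qed
  then have "T = (x ^ (a * (q + d)) - 1 - x ^ d * (x ^ a - 1) * G) / (x ^ d - 1)"
    using nonzero(1) by (simp add: eq_divide_eq ac_simps)
  then have "T / (x ^ a - 1)
      = (x ^ (a * (q + d)) - 1) / ((x ^ d - 1) * (x ^ a - 1)) - x ^ d * G / (x ^ d - 1)"
    using nonzero(2) by (simp add: diff_divide_distrib ac_simps)
  moreover have "(x ^ b - 1) * G = x ^ (q * b) - 1"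
    using power_diff_1_eq[of "x ^ b" q] by (simp add: G_def mult.commute[of _ b] power_mult)
  then have "(x ^ (q * b) - 1) / ((inverse (x ^ d) - 1) * (x ^ b - 1)) = G / (inverse (x ^ d) - 1)"
    using nonzero(3) by (metis mult.commute nonzero_mult_divide_mult_cancel_right)
  moreover have "G / (inverse (x ^ d) - 1) = - (x ^ d * G / (x ^ d - 1))"
    using assms(5) nonzero(1) by (simp add: field_simps)
  ultimately show ?thesis
    by simp
qed

lemma exp_series_power_sums:
  fixes A :: "nat set" and z :: "'a::{real_normed_field,banach}"
  assumes "finite A"
  shows "(\<Sum>m. of_nat (\<Sum>n\<in>A. n ^ m) * z ^ m / of_nat (fact m)) = (\<Sum>n\<in>A. exp z ^ n)"
proof -
  have "(\<lambda>m. (of_nat n * z) ^ m / of_nat (fact m)) sums exp z ^ n" for n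
    using exp_converges[of "of_nat n * z"] unfolding exp_of_nat_mult
    by (simp add: scaleR_conv_of_real divide_inverse mult.commute)
  then have "(\<lambda>m. \<Sum>n\<in>A. (of_nat n * z) ^ m / of_nat (fact m)) sums (\<Sum>n\<in>A. exp z ^ n)"
    by (rule sums_sum)
  then show ?thesis
    by (simp add: sums_iff sum_distrib_right sum_divide_distrib power_mult_distrib)
qed

theorem mainTheorem4:
  fixes a d s b :: nat and z :: complex
  assumes "a \<ge> 2" and "d \<ge> 1" and "coprime a d" and "1 \<le> s" and "s < a"
    and "b = a + s * d"
    and "exp (of_nat d * z) \<noteq> 1" and "exp (of_nat a * z) \<noteq> 1"
    and "exp (- of_nat d * z) \<noteq> 1" and "exp (of_nat b * z) \<noteq> 1" and "exp z \<noteq> 1"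
  shows "(\<Sum>m. of_nat (S a d s m) * z ^ m / of_nat (fact m)) =
     (exp (of_int \<lceil>real (b - 1) / real s\<rceil> * of_nat a * z) - 1)
        / ((exp (of_nat d * z) - 1) * (exp (of_nat a * z) - 1))
   + (exp (of_int \<lceil>real (a - 1) / real s\<rceil> * of_nat b * z) - 1)
        / ((exp (- of_nat d * z) - 1) * (exp (of_nat b * z) - 1))
   - 1 / (exp z - 1)"
proof -
  have "0 < a" "0 < s"
    using assms(1,4) by simp_all
  define q where "q = (a - 1 + s - 1) div s"
  have ceil_a: "\<lceil>real (a - 1) / real s\<rceil> = int q"
    using \<open>0 < s\<close> by (simp add: ceiling_of_nat_divide q_def)
  have "real (b - 1) / real s = real (a - 1) / real s + real d"
    using assms(1,6) \<open>0 < s\<close> by (simp add: field_simps of_nat_diff)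
  then have ceil_b: "\<lceil>real (b - 1) / real s\<rceil> = int (q + d)"
    using ceil_a ceiling_add_of_int[of "real (a - 1) / real s" "int d"] by simp
  have "exp (of_int \<lceil>real (b - 1) / real s\<rceil> * of_nat a * z) = exp z ^ (a * (q + d))"
    unfolding ceil_b using exp_of_nat_mult[of "a * (q + d)" z] by (simp add: ac_simps)
  moreover have "exp (of_int \<lceil>real (a - 1) / real s\<rceil> * of_nat b * z) = exp z ^ (q * b)"
    unfolding ceil_a using exp_of_nat_mult[of "q * b" z] by (simp add: ac_simps)
  moreover have "exp (- of_nat d * z) = inverse (exp z ^ d)"
    using exp_of_nat_mult[of d z] by (simp add: exp_minus)
  moreover have "(\<Sum>m. of_nat (S a d s m) * z ^ m / of_nat (fact m)) = (\<Sum>n\<in>NR a d s. exp z ^ n)"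
    unfolding S_def using finite_NR[OF assms(3) \<open>0 < a\<close> \<open>0 < s\<close>] by (rule exp_series_power_sums)
  ultimately show ?thesis
    using NR_generating_function[OF assms(3) \<open>0 < a\<close> \<open>0 < s\<close> assms(6), of "exp z"] assms(7-11)
    unfolding exp_of_nat_mult q_def by simp
qed

end
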